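(* Let $\mathrm{opt}(\mathcal{I}_{\textsf{EVSP}})$ and $\mathrm{opt}(\mathcal{I}_{\textsf{BPP}})$ denote, respectively, the optimal value for the instances $\mathcal{I}_{\textsf{EVSP}}$ and $\mathcal{I}_{\textsf{BPP}}$, where $\mathcal{I}_{\textsf{EVSP}} = f(\mathcal{I}_{\textsf{BPP}})$. Then $\mathrm{opt}(\mathcal{I}_{\textsf{EVSP}}) = 2n - \mathrm{opt}(\mathcal{I}_{\textsf{BPP}})$.
   Context: The electric vehicle sharing problem (EVSP): there is a set of stations, each with a capacity (number of parking spaces) and a number of charging facilities; a fleet of identical electric vehicles with battery capacity $\textsf{L}$ initially located at stations; and a set of customers, each with a set of driving demands $(s^{\text{out}}, t_i, s^{\text{in}}, t_j, \varepsilon)$ (pick-up station, departure time, drop-off station, arrival time, required energy). A demand is fulfilled by a vehicle if the vehicle is at the pick-up station at time $t_i$, its battery energy is at least $\varepsilon$, and there is a free parking space at the drop-off station; the vehicle's energy decreases by $\varepsilon$ and increases only by charging at a charging facility. A customer is served iff all its demands are fulfilled; the objective is to maximize the total rental time $\sum (t_j - t_i)$ over demands of served customers. The one-dimensional bin packing problem (BPP): given items $\mathcal{N} = \{1,\dots,n\}$ with sizes $\ell_i \in (0,1]$, find a partition $\{\mathcal{N}_1,\dots,\mathcal{N}_k\}$ of $\mathcal{N}$ such that the sizes in each part sum to at most $1$ and $k$ (the number of bins) is minimized. The reduction $f$ maps a BPP instance $\mathcal{I}_{\textsf{BPP}}$ to the EVSP instance $\mathcal{I}_{\textsf{EVSP}}$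 with $2n$ customers, each having a single demand: there is a single station $s$ with capacity $n$ and no charging facilities; there are $n$ fully charged vehicles initially at $s$, each with battery capacity $\textsf{L} = 1$; for each item $i \in \mathcal{N}$ there is an item customer with the single demand $(s, 2i, s, 2i+1, \ell_i)$; and there are $n$ dummy customers, each with the single demand $(s, 1, s, 2, \textsf{L})$. Each customer contributes rental time $1$ to the objective, so maximizing total rental time is equivalent to maximizing the number of served customers. *)

theory Defs
  imports Complex_Main "HOL-Library.Disjoint_Sets"
begin

definition bpp_feasible :: "nat \<Rightarrow> (nat \<Rightarrow> real) \<Rightarrow> nat \<Rightarrow> bool" where
  "bpp_feasible n l k \<longleftrightarrow>
     (\<exists>P. partition_on {1..n} P \<and> card P = k \<and> (\<forall>B\<in>P. (\<Sum>i\<in>B. l i) \<le> 1))"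

definition bpp_opt :: "nat \<Rightarrow> (nat \<Rightarrow> real) \<Rightarrow> nat" where
  "bpp_opt n l = (LEAST k. bpp_feasible n l k)"

text \<open>A driving demand: pick-up station, departure time, drop-off station,
arrival time, required energy.  Time is discrete (natural numbers).\<close>

record demand =
  d_out :: nat
  d_dep :: nat
  d_in  :: nat
  d_arr :: nat
  d_eps :: real

text \<open>Stations are 0..<n_st, vehicles 0..<n_veh, customers 0..<length custs;
customer c has the demand list custs ! c.  Charging: a vehicle parked at a station
and occupying one of its charging facilities during a unit time step gains at most
c_rate energy (never exceeding the battery capacity).\<close>

record evsp_inst =
  n_st    :: nat
  st_cap  :: "nat \<Rightarrow> nat"
  st_chg  :: "nat \<Rightarrow> nat"
  batt    :: real
  c_rate  :: real
  n_veh   :: nat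
  v_home  :: "nat \<Rightarrow> nat"
  v_en0   :: "nat \<Rightarrow> real"
  custs   :: "demand list list"

datatype action = Idle | Charging | Riding "nat \<times> nat"

definition dem :: "evsp_inst \<Rightarrow> nat \<times> nat \<Rightarrow> demand" where
  "dem I d = custs I ! fst d ! snd d"

definition valid_dem :: "evsp_inst \<Rightarrow> nat \<times> nat \<Rightarrow> bool" where
  "valid_dem I d \<longleftrightarrow> fst d < length (custs I) \<and> snd d < length (custs I ! fst d)"

definition parked :: "evsp_inst \<Rightarrow> (nat \<Rightarrow> nat \<Rightarrow> action) \<Rightarrow> nat \<Rightarrow> nat \<Rightarrow> bool" where
  "parked I act v t \<longleftrightarrow> \<not> (\<exists>d. act v t = Riding d \<and> d_dep (dem I d) < t)"

text \<open>A schedule: served customer set S, vehicle assignment asg of demands,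
actions act v t (for the step t to t+1), location loc v t and energy en v t
of vehicle v at instant t.\<close>

definition evsp_feasible ::
  "evsp_inst \<Rightarrow> nat set \<Rightarrow> (nat \<times> nat \<Rightarrow> nat) \<Rightarrow> (nat \<Rightarrow> nat \<Rightarrow> action)
     \<Rightarrow> (nat \<Rightarrow> nat \<Rightarrow> nat) \<Rightarrow> (nat \<Rightarrow> nat \<Rightarrow> real) \<Rightarrow> bool" where
  "evsp_feasible I S asg act loc en \<longleftrightarrow>
     S \<subseteq> {..<length (custs I)} \<and>
     \<comment> \<open>initial configuration\<close>
     (\<forall>v<n_veh I. loc v 0 = v_home I v \<and> en v 0 = v_en0 I v) \<and>
     \<comment> \<open>energy stays within the battery\<close>
     (\<forall>v<n_veh I. \<forall>t. 0 \<le> en v t \<and> en v t \<le> batt I) \<and>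
     \<comment> \<open>parked vehicles are at stations\<close>
     (\<forall>v<n_veh I. \<forall>t. parked I act v t \<longrightarrow> loc v t < n_st I) \<and>
     \<comment> \<open>idle / charging steps\<close>
     (\<forall>v<n_veh I. \<forall>t. (act v t = Idle \<longrightarrow> loc v (Suc t) = loc v t \<and> en v (Suc t) = en v t)
        \<and> (act v t = Charging \<longrightarrow> loc v (Suc t) = loc v t \<and> en v t \<le> en v (Suc t)
              \<and> en v (Suc t) \<le> min (batt I) (en v t + c_rate I))) \<and>
     \<comment> \<open>riding only on assigned demands of served customers, during their time window\<close>
     (\<forall>v<n_veh I. \<forall>t d. act v t = Riding d \<longrightarrow>
        valid_dem I d \<and> fst d \<in> S \<and> asg d = v \<and> d_dep (dem I d) \<le> t \<and> t < d_arr (dem I d)) \<and>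
     \<comment> \<open>every demand of a served customer is fulfilled by its assigned vehicle\<close>
     (\<forall>d. valid_dem I d \<and> fst d \<in> S \<longrightarrow>
        (let v = asg d; e = dem I d in
          v < n_veh I \<and>
          (\<forall>t. d_dep e \<le> t \<and> t < d_arr e \<longrightarrow> act v t = Riding d) \<and>
          loc v (d_dep e) = d_out e \<and> d_eps e \<le> en v (d_dep e) \<and>
          loc v (d_arr e) = d_in e \<and> en v (d_arr e) = en v (d_dep e) - d_eps e)) \<and>
     \<comment> \<open>parking capacities\<close>
     (\<forall>t s. s < n_st I \<longrightarrow>
        card {v. v < n_veh I \<and> parked I act v t \<and> loc v t = s} \<le> st_cap I s) \<and>
     \<comment> \<open>charging facilities\<close>
     (\<forall>t s. card {v. v < n_veh I \<and> act v t = Charging \<and> loc v t = s} \<le> st_chg I s)"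

definition rental_time :: "evsp_inst \<Rightarrow> nat set \<Rightarrow> nat" where
  "rental_time I S = (\<Sum>c\<in>S. \<Sum>e\<leftarrow>custs I ! c. d_arr e - d_dep e)"

definition evsp_opt :: "evsp_inst \<Rightarrow> nat" where
  "evsp_opt I = Max {rental_time I S | S. \<exists>asg act loc en. evsp_feasible I S asg act loc en}"

definition red_f :: "nat \<Rightarrow> (nat \<Rightarrow> real) \<Rightarrow> evsp_inst" where
  "red_f n l = \<lparr> n_st = 1, st_cap = (\<lambda>_. n), st_chg = (\<lambda>_. 0), batt = 1, c_rate = 1,
     n_veh = n, v_home = (\<lambda>_. 0), v_en0 = (\<lambda>_. 1),
     custs = map (\<lambda>i. [\<lparr>d_out = 0, d_dep = 2*i, d_in = 0, d_arr = 2*i+1, d_eps = l i\<rparr>]) [1..<n+1]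
             @ replicate n [\<lparr>d_out = 0, d_dep = 1, d_in = 0, d_arr = 2, d_eps = 1\<rparr>] \<rparr>"

end

theory Submission
  imports Defs
begin

text \<open>In f(I) nothing can be charged and every ride lasts one time step, so the
energy of a vehicle at time t is its initial energy minus the energy of the rides it has
completed. Hence a set of customers can be served iff it can be assigned to the n vehicles
with load at most 1 per vehicle and no vehicle taking two rides at the same time; any such
assignment is realised by vehicles that never leave the station. A dummy customer drains a
full battery, so its vehicle serves nobody else: if D dummies and the item customers T are
served, then T is packed into the at most n - |D| remaining vehicles, and adding singleton
bins for the unserved items gives opt(BPP) \<le> n - |D| + n - |T|. Conversely, an optimal
packing into k bins is carried by k vehicles, and each of the other n - k vehicles serves one
dummy, so 2n - k customers are served.\<close>

section \<open>Bin packing\<close>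

lemma bpp_feasible_of_labelling:
  fixes h :: "nat \<Rightarrow> 'a"
  assumes "\<And>j. (\<Sum>i\<in>{i\<in>{1..n}. h i = j}. l i) \<le> 1"
  shows "bpp_feasible n l (card (h ` {1..n}))"
proof -
  define bin where "bin j = {i\<in>{1..n}. h i = j}" for j
  have "partition_on {1..n} (bin ` h ` {1..n})"
  proof (rule partition_onI)
    show "p \<in> bin ` h ` {1..n} \<Longrightarrow> q \<in> bin ` h ` {1..n} \<Longrightarrow> p \<noteq> q \<Longrightarrow> disjnt p q" for p q
      by (auto simp: bin_def disjnt_def)
  qed (auto simp: bin_def)
  moreover have "card (bin ` h ` {1..n}) = card (h ` {1..n})"
  proof (rule card_image, rule inj_onI)
    fix x y assume "x \<in> h ` {1..n}" "y \<in> h ` {1..n}" "bin x = bin y"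
    then obtain i where "i \<in> bin x" "h i = x" by (auto simp: bin_def)
    with \<open>bin x = bin y\<close> show "x = y" by (auto simp: bin_def)
  qed
  moreover have "\<forall>B\<in>bin ` h ` {1..n}. (\<Sum>i\<in>B. l i) \<le> 1"
    using assms by (auto simp: bin_def)
  ultimately show ?thesis
    unfolding bpp_feasible_def by blast
qed

lemma labelling_of_bpp_feasible:
  assumes "bpp_feasible n l k"
  obtains h where "h ` {1..n} \<subseteq> {..<k}" "\<And>j. (\<Sum>i\<in>{i\<in>{1..n}. h i = j}. l i) \<le> 1"
proof -
  obtain P where P: "partition_on {1..n} P" "card P = k" "\<And>B. B \<in> P \<Longrightarrow> (\<Sum>i\<in>B. l i) \<le> 1"
    using assms unfolding bpp_feasible_def by blast
  obtain e where e: "bij_betw e P {..<k}"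
    using ex_bij_betw_finite_nat[OF finite_elements[OF _ P(1)]] P(2) by (auto simp: atLeast0LessThan)
  define block where "block i = (THE B. B \<in> P \<and> i \<in> B)" for i
  have block_eq: "block i = B" if "B \<in> P" "i \<in> B" for i B
    unfolding block_def using that partition_onD2[OF P(1)]
    by (intro the_equality) (auto simp: disjoint_def)
  have block_mem: "block i \<in> P \<and> i \<in> block i" if "i \<in> {1..n}" for i
    using that partition_onD1[OF P(1)] block_eq by blast
  have bin: "{i\<in>{1..n}. e (block i) = e B} = B" if "B \<in> P" for B
    using that block_eq block_mem partition_onD1[OF P(1)] bij_betw_imp_inj_on[OF e]
    by (auto dest: inj_onD)
  show ?thesis
  proof
    show "(e \<circ> block) ` {1..n} \<subseteq> {..<k}"
      using block_mem bij_betwE[OF e] by auto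
    show "(\<Sum>i\<in>{i\<in>{1..n}. (e \<circ> block) i = j}. l i) \<le> 1" for j
    proof (cases "j \<in> e ` P")
      case True
      then show ?thesis using bin P(3) by auto
    next
      case False
      then have "{i\<in>{1..n}. (e \<circ> block) i = j} = {}" using block_mem by fastforce
      then show ?thesis by (simp only: sum.empty zero_le_one)
    qed
  qed
qed

lemma bpp_feasible_singletons:
  assumes "\<forall>i\<in>{1..n}. l i \<le> 1"
  shows "bpp_feasible n l n"
proof -
  have "{i\<in>{1..n}. i = j} = (if j \<in> {1..n} then {j} else {})" for j
    by auto
  then have "(\<Sum>i\<in>{i\<in>{1..n}. i = j}. l i) \<le> 1" for j
    using assms by simp
  then show ?thesis using bpp_feasible_of_labelling[where h="\<lambda>i. i"] by simp
qed

lemma bpp_opt_le: "bpp_feasible n l k \<Longrightarrow> bpp_opt n l \<le> k"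
  unfolding bpp_opt_def by (rule Least_le)

lemma bpp_feasible_bpp_opt:
  "\<forall>i\<in>{1..n}. l i \<le> 1 \<Longrightarrow> bpp_feasible n l (bpp_opt n l)"
  unfolding bpp_opt_def by (rule LeastI[OF bpp_feasible_singletons])

lemma bpp_opt_le_items:
  "\<forall>i\<in>{1..n}. l i \<le> 1 \<Longrightarrow> bpp_opt n l \<le> n"
  by (rule bpp_opt_le[OF bpp_feasible_singletons])

lemma bpp_opt_le_partial_packing:
  fixes h :: "nat \<Rightarrow> 'a"
  assumes "\<forall>i\<in>{1..n}. l i \<le> 1" "T \<subseteq> {1..n}"
    and "\<And>j. (\<Sum>i\<in>{i\<in>T. h i = j}. l i) \<le> 1"
  shows "bpp_opt n l \<le> card (h ` T) + (n - card T)"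
proof -
  define h' where "h' i = (if i \<in> T then Inl (h i) else Inr i)" for i
  have "(\<Sum>i\<in>{i\<in>{1..n}. h' i = j}. l i) \<le> 1" for j
  proof (cases j)
    case (Inl a)
    then have "{i\<in>{1..n}. h' i = j} = {i\<in>T. h i = a}" using assms(2) by (auto simp: h'_def)
    then show ?thesis using assms(3) by simp
  next
    case (Inr b)
    then have "{i\<in>{1..n}. h' i = j} = (if b \<in> {1..n} - T then {b} else {})"
      by (auto simp: h'_def)
    then show ?thesis using assms(1) by simp
  qed
  then have "bpp_opt n l \<le> card (h' ` {1..n})"
    by (intro bpp_opt_le bpp_feasible_of_labelling)
  also have "h' ` {1..n} = Inl ` h ` T \<union> Inr ` ({1..n} - T)"
    using assms(2) by (auto simp: h'_def)
  also have "card \<dots> \<le> card (h ` T) + (n - card T)"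
    using card_Un_le[of "Inl ` h ` T" "Inr ` ({1..n} - T)"] assms(2)
    by (simp add: card_image card_Diff_subset finite_subset)
  finally show ?thesis .
qed

section \<open>Energy bookkeeping for schedules without charging\<close>

definition served_demands :: "evsp_inst \<Rightarrow> nat set \<Rightarrow> (nat \<times> nat) set" where
  "served_demands I S = {d. valid_dem I d \<and> fst d \<in> S}"

definition departing :: "evsp_inst \<Rightarrow> nat set \<Rightarrow> (nat \<times> nat \<Rightarrow> nat) \<Rightarrow> nat \<Rightarrow> nat \<Rightarrow> (nat \<times> nat) set" where
  "departing I S asg v t = {d \<in> served_demands I S. asg d = v \<and> d_dep (dem I d) = t}"

definition spent_energy :: "evsp_inst \<Rightarrow> nat set \<Rightarrow> (nat \<times> nat \<Rightarrow> nat) \<Rightarrow> nat \<Rightarrow> nat \<Rightarrow> real" where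
  "spent_energy I S asg v t =
     (\<Sum>d | d \<in> served_demands I S \<and> asg d = v \<and> d_arr (dem I d) \<le> t. d_eps (dem I d))"

definition vehicle_load :: "evsp_inst \<Rightarrow> nat set \<Rightarrow> (nat \<times> nat \<Rightarrow> nat) \<Rightarrow> nat \<Rightarrow> real" where
  "vehicle_load I S asg v = (\<Sum>d | d \<in> served_demands I S \<and> asg d = v. d_eps (dem I d))"

lemma finite_served_demands: "finite (served_demands I S)"
proof (rule finite_subset)
  show "served_demands I S \<subseteq> (SIGMA c:{..<length (custs I)}. {..<length (custs I ! c)})"
    by (auto simp: served_demands_def valid_dem_def)
qed auto

lemma spent_energy_nonneg:
  "(\<And>d. d \<in> served_demands I S \<Longrightarrow> 0 \<le> d_eps (dem I d)) \<Longrightarrow> 0 \<le> spent_energy I S asg v t"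
  unfolding spent_energy_def by (rule sum_nonneg) auto

lemma spent_energy_le_vehicle_load:
  "(\<And>d. d \<in> served_demands I S \<Longrightarrow> 0 \<le> d_eps (dem I d)) \<Longrightarrow>
    spent_energy I S asg v t \<le> vehicle_load I S asg v"
  unfolding spent_energy_def vehicle_load_def
  by (rule sum_mono2) (auto intro: finite_subset[OF _ finite_served_demands])

lemma spent_energy_eq_vehicle_load:
  "(\<And>d. d \<in> served_demands I S \<Longrightarrow> d_arr (dem I d) \<le> t) \<Longrightarrow>
    spent_energy I S asg v t = vehicle_load I S asg v"
  unfolding spent_energy_def vehicle_load_def by (rule sum.cong) auto

lemma feasible_assigned_vehicle:
  "evsp_feasible I S asg act loc en \<Longrightarrow> d \<in> served_demands I S \<Longrightarrow> asg d < n_veh I"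
  unfolding evsp_feasible_def served_demands_def Let_def by blast

locale unit_ride_instance =
  fixes I :: evsp_inst
  assumes unit_rides: "valid_dem I d \<Longrightarrow> d_arr (dem I d) = Suc (d_dep (dem I d))"
    and no_chargers: "st_chg I s = 0"
begin

lemma spent_energy_0: "spent_energy I S asg v 0 = 0"
proof -
  have none: "{d. d \<in> served_demands I S \<and> asg d = v \<and> d_arr (dem I d) \<le> 0} = {}"
    by (auto simp: served_demands_def unit_rides)
  show ?thesis unfolding spent_energy_def none by simp
qed

lemma spent_energy_Suc:
  "spent_energy I S asg v (Suc t) =
     spent_energy I S asg v t + (\<Sum>d\<in>departing I S asg v t. d_eps (dem I d))"
proof -
  let ?done = "\<lambda>t. {d. d \<in> served_demands I S \<and> asg d = v \<and> d_arr (dem I d) \<le> t}"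
  have "?done (Suc t) = ?done t \<union> departing I S asg v t"
    by (auto simp: departing_def served_demands_def unit_rides)
  moreover have "?done t \<inter> departing I S asg v t = {}"
    by (auto simp: departing_def served_demands_def unit_rides)
  moreover have "finite (?done t)" "finite (departing I S asg v t)"
    by (auto simp: departing_def intro: finite_subset[OF _ finite_served_demands])
  ultimately show ?thesis
    unfolding spent_energy_def by (simp add: sum.union_disjoint)
qed

lemma spent_energy_Suc_ride:
  assumes "\<And>d. act v t = Riding d \<longleftrightarrow> d \<in> departing I S asg v t"
  shows "spent_energy I S asg v (Suc t) =
     spent_energy I S asg v t + (case act v t of Riding d \<Rightarrow> d_eps (dem I d) | _ \<Rightarrow> 0)"
proof (cases "act v t")
  case (Riding d)
  have "d' = d" if "d' \<in> departing I S asg v t" for d'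
    using assms[of d'] that Riding by simp
  moreover have "d \<in> departing I S asg v t"
    using assms[of d] Riding by simp
  ultimately have "departing I S asg v t = {d}"
    by blast
  then show ?thesis using Riding by (simp add: spent_energy_Suc)
next
  case Idle
  then have "departing I S asg v t = {}"
    using assms by auto
  then show ?thesis using Idle by (simp add: spent_energy_Suc)
next
  case Charging
  then have "departing I S asg v t = {}"
    using assms by auto
  then show ?thesis using Charging by (simp add: spent_energy_Suc)
qed

lemma feasible_Riding_iff:
  assumes feasible: "evsp_feasible I S asg act loc en" and "v < n_veh I"
  shows "act v t = Riding d \<longleftrightarrow> d \<in> departing I S asg v t"
proof
  assume "act v t = Riding d"
  then have "valid_dem I d \<and> fst d \<in> S \<and> asg d = v \<and> d_dep (dem I d) \<le> t \<and> t < d_arr (dem I d)"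
    using assms unfolding evsp_feasible_def by blast
  then show "d \<in> departing I S asg v t"
    by (auto simp: departing_def served_demands_def unit_rides)
next
  assume "d \<in> departing I S asg v t"
  then have "d \<in> served_demands I S" "asg d = v" "d_dep (dem I d) = t" "t < d_arr (dem I d)"
    by (auto simp: departing_def served_demands_def unit_rides)
  then show "act v t = Riding d"
    using feasible unfolding evsp_feasible_def served_demands_def Let_def by blast
qed

lemma feasible_energy:
  assumes feasible: "evsp_feasible I S asg act loc en" and "v < n_veh I"
  shows "en v t = v_en0 I v - spent_energy I S asg v t"
proof (induction t)
  case 0
  then show ?case using assms by (simp add: evsp_feasible_def spent_energy_0)
next
  case (Suc t)
  have spent: "spent_energy I S asg v (Suc t) =
      spent_energy I S asg v t + (case act v t of Riding d \<Rightarrow> d_eps (dem I d) | _ \<Rightarrow> 0)"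
    by (rule spent_energy_Suc_ride) (rule feasible_Riding_iff[OF assms])
  show ?case
  proof (cases "act v t")
    case Idle
    then have "en v (Suc t) = en v t"
      using assms unfolding evsp_feasible_def by blast
    then show ?thesis using Suc.IH spent Idle by simp
  next
    case Charging
    let ?C = "{w. w < n_veh I \<and> act w t = Charging \<and> loc w t = loc v t}"
    have "card ?C \<le> st_chg I (loc v t)"
      using feasible unfolding evsp_feasible_def by blast
    then have "card ?C = 0"
      using no_chargers by simp
    moreover have "finite ?C" by simp
    ultimately show ?thesis using Charging \<open>v < n_veh I\<close> by auto
  next
    case (Riding d)
    then have "d \<in> departing I S asg v t"
      using feasible_Riding_iff[OF assms] by blast
    then have "d \<in> served_demands I S" "asg d = v" "d_dep (dem I d) = t"
      "d_arr (dem I d) = Suc t"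
      by (auto simp: departing_def served_demands_def unit_rides)
    moreover have "en (asg d') (d_arr (dem I d')) = en (asg d') (d_dep (dem I d')) - d_eps (dem I d')"
      if "d' \<in> served_demands I S" for d'
      using feasible that unfolding evsp_feasible_def served_demands_def Let_def by blast
    ultimately have "en v (Suc t) = en v t - d_eps (dem I d)"
      by metis
    then show ?thesis using Suc.IH spent Riding by simp
  qed
qed

lemma feasible_vehicle_load_le:
  assumes feasible: "evsp_feasible I S asg act loc en" and v: "v < n_veh I"
  shows "vehicle_load I S asg v \<le> v_en0 I v"
proof -
  define t where "t = (\<Sum>d\<in>served_demands I S. d_arr (dem I d))"
  have "d_arr (dem I d) \<le> t" if "d \<in> served_demands I S" for d
    unfolding t_def using that by (intro member_le_sum) (simp_all add: finite_served_demands)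
  then have "vehicle_load I S asg v = v_en0 I v - en v t"
    using feasible_energy[OF assms] spent_energy_eq_vehicle_load by simp
  moreover have "0 \<le> en v t"
    using feasible v unfolding evsp_feasible_def by blast
  ultimately show ?thesis by simp
qed

end

text \<open>Every vehicle stays at its home station and takes each of its rides at the
departure time of the demand.\<close>

locale round_trip_plan = unit_ride_instance +
  fixes S :: "nat set" and asg :: "nat \<times> nat \<Rightarrow> nat"
  assumes served_customers: "S \<subseteq> {..<length (custs I)}"
    and home_station: "v < n_veh I \<Longrightarrow> v_home I v < n_st I"
    and home_capacity: "card {v. v < n_veh I \<and> v_home I v = s} \<le> st_cap I s"
    and initial_energy: "v < n_veh I \<Longrightarrow> v_en0 I v \<le> batt I"
    and assigned_vehicle: "d \<in> served_demands I S \<Longrightarrow> asg d < n_veh I"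
    and round_trip: "d \<in> served_demands I S \<Longrightarrow>
      d_out (dem I d) = v_home I (asg d) \<and> d_in (dem I d) = v_home I (asg d)"
    and energy_nonneg: "d \<in> served_demands I S \<Longrightarrow> 0 \<le> d_eps (dem I d)"
    and distinct_departures: "d \<in> departing I S asg v t \<Longrightarrow> d' \<in> departing I S asg v t \<Longrightarrow> d = d'"
    and load_le_initial: "v < n_veh I \<Longrightarrow> vehicle_load I S asg v \<le> v_en0 I v"
begin

definition plan_act :: "nat \<Rightarrow> nat \<Rightarrow> action" where
  "plan_act v t =
     (if departing I S asg v t = {} then Idle else Riding (THE d. d \<in> departing I S asg v t))"

definition plan_en :: "nat \<Rightarrow> nat \<Rightarrow> real" where
  "plan_en v t = v_en0 I v - spent_energy I S asg v t"

lemma plan_act_Riding_iff: "plan_act v t = Riding d \<longleftrightarrow> d \<in> departing I S asg v t"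
proof -
  have "(THE d. d \<in> departing I S asg v t) = d" if "d \<in> departing I S asg v t" for d
    using that distinct_departures by blast
  then show ?thesis
    unfolding plan_act_def by (metis action.distinct(3) action.inject all_not_in_conv)
qed

lemma plan_en_Suc:
  "plan_en v (Suc t) = plan_en v t - (case plan_act v t of Riding d \<Rightarrow> d_eps (dem I d) | _ \<Rightarrow> 0)"
  using spent_energy_Suc_ride[where act = plan_act and v = v and t = t] plan_act_Riding_iff
  by (simp add: plan_en_def)

lemma plan_en_bounds:
  assumes "v < n_veh I"
  shows "0 \<le> plan_en v t" "plan_en v t \<le> batt I"
proof -
  show "0 \<le> plan_en v t"
    using spent_energy_le_vehicle_load[where S = S and asg = asg and v = v and t = t, OF energy_nonneg]
      load_le_initial[OF assms]
    unfolding plan_en_def by linarith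
  show "plan_en v t \<le> batt I"
    using spent_energy_nonneg[where S = S and asg = asg and v = v and t = t, OF energy_nonneg]
      initial_energy[OF assms]
    unfolding plan_en_def by linarith
qed

lemma plan_rides_during_demand:
  assumes "d \<in> served_demands I S" "d_dep (dem I d) \<le> t" "t < d_arr (dem I d)"
  shows "plan_act (asg d) t = Riding d"
proof -
  have "t = d_dep (dem I d)"
    using assms unit_rides by (simp add: served_demands_def)
  then show ?thesis
    using assms(1) by (simp add: plan_act_Riding_iff departing_def)
qed

lemma plan_en_demand:
  assumes served: "d \<in> served_demands I S"
  shows "plan_en (asg d) (d_arr (dem I d)) = plan_en (asg d) (d_dep (dem I d)) - d_eps (dem I d)"
    and "d_eps (dem I d) \<le> plan_en (asg d) (d_dep (dem I d))"
proof -
  have "d_arr (dem I d) = Suc (d_dep (dem I d))"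
    using served unit_rides by (simp add: served_demands_def)
  then show drop: "plan_en (asg d) (d_arr (dem I d)) = plan_en (asg d) (d_dep (dem I d)) - d_eps (dem I d)"
    using plan_rides_during_demand[OF served] by (simp add: plan_en_Suc)
  show "d_eps (dem I d) \<le> plan_en (asg d) (d_dep (dem I d))"
    using drop plan_en_bounds(1)[OF assigned_vehicle[OF served]] by (smt (verit))
qed

lemma plan_feasible: "evsp_feasible I S asg plan_act (\<lambda>v _. v_home I v) plan_en"
proof -
  have init: "\<forall>v<n_veh I. v_home I v = v_home I v \<and> plan_en v 0 = v_en0 I v"
    by (simp add: plan_en_def spent_energy_0)
  have bounds: "\<forall>v<n_veh I. \<forall>t. 0 \<le> plan_en v t \<and> plan_en v t \<le> batt I"
    using plan_en_bounds by blast
  have parked: "\<forall>v<n_veh I. \<forall>t. parked I plan_act v t \<longrightarrow> v_home I v < n_st I"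
    using home_station by blast
  have idle: "\<forall>v<n_veh I. \<forall>t. (plan_act v t = Idle \<longrightarrow> v_home I v = v_home I v \<and> plan_en v (Suc t) = plan_en v t)
      \<and> (plan_act v t = Charging \<longrightarrow> v_home I v = v_home I v \<and> plan_en v t \<le> plan_en v (Suc t)
            \<and> plan_en v (Suc t) \<le> min (batt I) (plan_en v t + c_rate I))"
    by (simp add: plan_en_Suc plan_act_def)
  have rides: "\<forall>v<n_veh I. \<forall>t d. plan_act v t = Riding d \<longrightarrow>
      valid_dem I d \<and> fst d \<in> S \<and> asg d = v \<and> d_dep (dem I d) \<le> t \<and> t < d_arr (dem I d)"
    by (auto simp: plan_act_Riding_iff departing_def served_demands_def unit_rides)
  have fulfilled: "\<forall>d. valid_dem I d \<and> fst d \<in> S \<longrightarrow> asg d < n_veh I \<and>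
      (\<forall>t. d_dep (dem I d) \<le> t \<and> t < d_arr (dem I d) \<longrightarrow> plan_act (asg d) t = Riding d) \<and>
      v_home I (asg d) = d_out (dem I d) \<and> d_eps (dem I d) \<le> plan_en (asg d) (d_dep (dem I d)) \<and>
      v_home I (asg d) = d_in (dem I d) \<and>
      plan_en (asg d) (d_arr (dem I d)) = plan_en (asg d) (d_dep (dem I d)) - d_eps (dem I d)"
    using assigned_vehicle round_trip plan_rides_during_demand plan_en_demand
    by (simp add: served_demands_def)
  have capacity: "\<forall>t s. s < n_st I \<longrightarrow>
      card {v. v < n_veh I \<and> parked I plan_act v t \<and> v_home I v = s} \<le> st_cap I s"
  proof (intro allI impI)
    fix t s
    have "card {v. v < n_veh I \<and> parked I plan_act v t \<and> v_home I v = s}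
        \<le> card {v. v < n_veh I \<and> v_home I v = s}"
      by (rule card_mono) auto
    then show "card {v. v < n_veh I \<and> parked I plan_act v t \<and> v_home I v = s} \<le> st_cap I s"
      using home_capacity order_trans by blast
  qed
  have chargers: "\<forall>t s. card {v. v < n_veh I \<and> plan_act v t = Charging \<and> v_home I v = s} \<le> st_chg I s"
    by (simp add: plan_act_def)
  show ?thesis
    unfolding evsp_feasible_def Let_def
    by (intro conjI served_customers init bounds parked idle rides fulfilled capacity chargers)
qed

end

section \<open>The reduced instance\<close>

text \<open>Customer c < n of f(I) is the item customer of item c + 1; customers n, ..., 2n - 1
are the dummies.\<close>

definition red_demand :: "nat \<Rightarrow> (nat \<Rightarrow> real) \<Rightarrow> nat \<Rightarrow> demand" where
  "red_demand n l c =
     (if c < n then \<lparr>d_out = 0, d_dep = 2*(c+1), d_in = 0, d_arr = 2*(c+1)+1, d_eps = l (c+1)\<rparr>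
      else \<lparr>d_out = 0, d_dep = 1, d_in = 0, d_arr = 2, d_eps = 1\<rparr>)"

lemma red_demand_simps [simp]:
  "d_out (red_demand n l c) = 0" "d_in (red_demand n l c) = 0"
  "d_arr (red_demand n l c) = Suc (d_dep (red_demand n l c))"
  by (simp_all add: red_demand_def)

lemma red_demand_eps_pos:
  "\<forall>i\<in>{1..n}. 0 < l i \<and> l i \<le> 1 \<Longrightarrow> 0 < d_eps (red_demand n l c)"
  by (simp add: red_demand_def)

lemma red_f_simps [simp]:
  "n_veh (red_f n l) = n" "n_st (red_f n l) = 1" "st_cap (red_f n l) s = n" "st_chg (red_f n l) s = 0"
  "batt (red_f n l) = 1" "v_home (red_f n l) v = 0" "v_en0 (red_f n l) v = 1"
  "length (custs (red_f n l)) = 2 * n"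
  by (simp_all add: red_f_def)

lemma red_f_custs_nth: "c < 2 * n \<Longrightarrow> custs (red_f n l) ! c = [red_demand n l c]"
  by (auto simp: red_f_def red_demand_def nth_append simp del: upt_Suc)

lemma served_demands_red_f:
  "S \<subseteq> {..<2 * n} \<Longrightarrow> served_demands (red_f n l) S = (\<lambda>c. (c, 0)) ` S"
  by (auto simp: served_demands_def valid_dem_def red_f_custs_nth subset_iff)

lemma dem_red_f: "c < 2 * n \<Longrightarrow> dem (red_f n l) (c, 0) = red_demand n l c"
  by (simp add: dem_def red_f_custs_nth)

lemma vehicle_load_red_f:
  assumes "S \<subseteq> {..<2 * n}"
  shows "vehicle_load (red_f n l) S asg v = (\<Sum>c | c \<in> S \<and> asg (c, 0) = v. d_eps (red_demand n l c))"
proof -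
  have "{d \<in> served_demands (red_f n l) S. asg d = v} = (\<lambda>c. (c, 0)) ` {c \<in> S. asg (c, 0) = v}"
    using assms by (auto simp: served_demands_red_f)
  moreover have "inj_on (\<lambda>c. (c, 0::nat)) {c \<in> S. asg (c, 0) = v}"
    by (rule inj_onI) simp
  ultimately show ?thesis
    unfolding vehicle_load_def using assms by (simp add: sum.reindex dem_red_f subset_iff)
qed

lemma rental_time_red_f: "S \<subseteq> {..<2 * n} \<Longrightarrow> rental_time (red_f n l) S = card S"
  unfolding rental_time_def by (simp add: red_f_custs_nth subset_iff)

interpretation red_f: unit_ride_instance "red_f n l" for n l
proof
  show "valid_dem (red_f n l) d \<Longrightarrow> d_arr (dem (red_f n l) d) = Suc (d_dep (dem (red_f n l) d))" for d
    by (auto simp: valid_dem_def dem_def red_f_custs_nth)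
qed simp

lemma bpp_opt_le_item_customers:
  fixes g :: "nat \<Rightarrow> 'a"
  assumes "\<forall>i\<in>{1..n}. l i \<le> 1" "T \<subseteq> {..<n}"
    and "\<And>v. (\<Sum>c | c \<in> T \<and> g c = v. l (Suc c)) \<le> 1"
  shows "bpp_opt n l \<le> card (g ` T) + (n - card T)"
proof -
  have "(\<Sum>i | i \<in> Suc ` T \<and> g (i - 1) = v. l i) \<le> 1" for v
  proof -
    have "{i. i \<in> Suc ` T \<and> g (i - 1) = v} = Suc ` {c. c \<in> T \<and> g c = v}" by auto
    then show ?thesis using assms(3)[of v] by (simp add: sum.reindex)
  qed
  moreover have "Suc ` T \<subseteq> {1..n}" using assms(2) by auto
  ultimately have "bpp_opt n l \<le> card ((\<lambda>i. g (i - 1)) ` Suc ` T) + (n - card (Suc ` T))"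
    using assms(1) by (intro bpp_opt_le_partial_packing) auto
  then show ?thesis by (simp add: image_image card_image)
qed

lemma assignment_card_bound:
  assumes L: "\<forall>i\<in>{1..n}. 0 < l i \<and> l i \<le> 1"
    and S: "S \<subseteq> {..<2 * n}" and g: "\<forall>c\<in>S. g c < n"
    and load: "\<And>v. (\<Sum>c | c \<in> S \<and> g c = v. d_eps (red_demand n l c)) \<le> 1"
  shows "card S + bpp_opt n l \<le> 2 * n"
proof -
  let ?w = "\<lambda>c. d_eps (red_demand n l c)"
  define T where "T = S \<inter> {..<n}"
  define D where "D = S - {..<n}"
  have finite: "finite S" "finite T" "finite D"
    using S by (auto simp: T_def D_def finite_subset)
  have fibre_le: "(\<Sum>c\<in>B. ?w c) \<le> 1" if "B \<subseteq> {c. c \<in> S \<and> g c = v}" for B v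
    using sum_mono2[OF _ that, of ?w] finite(1) load[of v] red_demand_eps_pos[OF L] less_imp_le
    by fastforce
  have alone: "c' = c" if "c \<in> D" "c' \<in> S" "g c' = g c" for c c'
  proof (rule ccontr)
    assume "c' \<noteq> c"
    then have "?w c + ?w c' \<le> 1"
      using fibre_le[of "{c, c'}" "g c"] that by (auto simp: D_def)
    moreover have "?w c = 1" using that by (simp add: D_def red_demand_def)
    ultimately show False using red_demand_eps_pos[OF L, of c'] by simp
  qed
  have "card D + card (g ` T) \<le> n"
  proof -
    have "inj_on g D" by (rule inj_onI) (use alone in \<open>auto simp: D_def\<close>)
    moreover have "g c \<noteq> g c'" if "c \<in> D" "c' \<in> T" for c c'
      using alone[OF that(1), of c'] that by (auto simp: D_def T_def)
    then have "g ` D \<inter> g ` T = {}" by blast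
    moreover have "g ` D \<union> g ` T \<subseteq> {..<n}" using g by (auto simp: D_def T_def)
    ultimately show ?thesis
      using card_mono[of "{..<n}" "g ` D \<union> g ` T"] finite
      by (simp add: card_Un_disjoint card_image)
  qed
  moreover have "bpp_opt n l \<le> card (g ` T) + (n - card T)"
  proof (rule bpp_opt_le_item_customers)
    show "(\<Sum>c | c \<in> T \<and> g c = v. l (Suc c)) \<le> 1" for v
    proof -
      have "(\<Sum>c | c \<in> T \<and> g c = v. ?w c) \<le> 1"
        by (rule fibre_le[of _ v]) (auto simp: T_def)
      then show ?thesis by (simp add: T_def red_demand_def)
    qed
  qed (use L in \<open>auto simp: T_def\<close>)
  moreover have "card S = card T + card D" "card T \<le> n"
    using finite card_mono[of "{..<n}" T] unfolding T_def D_def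
    by (auto simp: card_Int_Diff)
  ultimately show ?thesis by linarith
qed

lemma optimal_packing_assignment:
  assumes L: "\<forall>i\<in>{1..n}. 0 < l i \<and> l i \<le> 1"
  defines "k \<equiv> bpp_opt n l"
  obtains g where "\<forall>c<2 * n - k. g c < n"
    and "\<And>v. (\<Sum>c | c < 2 * n - k \<and> g c = v. d_eps (red_demand n l c)) \<le> 1"
    and "\<And>c c'. g c = g c' \<Longrightarrow> d_dep (red_demand n l c) = d_dep (red_demand n l c') \<Longrightarrow> c = c'"
proof -
  let ?w = "\<lambda>c. d_eps (red_demand n l c)"
  obtain h where h: "h ` {1..n} \<subseteq> {..<k}" "\<And>j. (\<Sum>i | i \<in> {1..n} \<and> h i = j. l i) \<le> 1"
    using labelling_of_bpp_feasible bpp_feasible_bpp_opt L unfolding k_def by blast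
  have "k \<le> n" using bpp_opt_le_items L unfolding k_def by blast
  have h_lt: "h (Suc c) < k" if "c < n" for c
    using h(1) that by (auto simp: image_subset_iff)
  define g where "g c = (if c < n then h (Suc c) else k + (c - n))" for c
  have vehicle: "g c < n" if "c < 2 * n - k" for c
  proof (cases "c < n")
    case True
    then show ?thesis using h_lt[OF True] \<open>k \<le> n\<close> by (simp add: g_def)
  qed (use that in \<open>simp add: g_def\<close>)
  have item_load: "(\<Sum>c | c < 2 * n - k \<and> g c = v. ?w c) \<le> 1" if "v < k" for v
  proof -
    have "{c. c < 2 * n - k \<and> g c = v} = {c. c < n \<and> h (Suc c) = v}"
      using that \<open>k \<le> n\<close> by (auto simp: g_def)
    moreover have "Suc ` {c. c < n \<and> h (Suc c) = v} = {i. i \<in> {1..n} \<and> h i = v}"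
    proof (intro equalityI subsetI)
      fix i assume "i \<in> {i. i \<in> {1..n} \<and> h i = v}"
      then show "i \<in> Suc ` {c. c < n \<and> h (Suc c) = v}"
        by (intro image_eqI[of _ _ "i - 1"]) auto
    qed auto
    ultimately show ?thesis
      using h(2)[of v] sum.reindex[of Suc "{c. c < n \<and> h (Suc c) = v}" l]
      by (simp add: red_demand_def comp_def)
  qed
  have dummy_load: "(\<Sum>c | c < 2 * n - k \<and> g c = v. ?w c) \<le> 1" if "\<not> v < k" for v
  proof -
    have "c = n + (v - k)" if "c < 2 * n - k" "g c = v" for c
      using that h_lt \<open>\<not> v < k\<close> by (cases "c < n") (auto simp: g_def)
    then have "(\<Sum>c | c < 2 * n - k \<and> g c = v. ?w c) \<le> (\<Sum>c\<in>{n + (v - k)}. ?w c)"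
      by (intro sum_mono2) (auto intro: less_imp_le[OF red_demand_eps_pos[OF L]])
    then show ?thesis by (simp add: red_demand_def)
  qed
  have "c = c'" if "g c = g c'" "d_dep (red_demand n l c) = d_dep (red_demand n l c')" for c c'
    using that by (auto simp: g_def red_demand_def split: if_splits)
  with vehicle item_load dummy_load show ?thesis
    by (intro that[of g]) auto
qed

lemma red_f_feasible_card_bound:
  assumes L: "\<forall>i\<in>{1..n}. 0 < l i \<and> l i \<le> 1"
    and feasible: "evsp_feasible (red_f n l) S asg act loc en"
  shows "S \<subseteq> {..<2 * n}" "card S + bpp_opt n l \<le> 2 * n"
proof -
  show S: "S \<subseteq> {..<2 * n}"
    using feasible by (simp add: evsp_feasible_def)
  have vehicle: "asg (c, 0) < n" if "c \<in> S" for c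
    using feasible_assigned_vehicle[OF feasible] that S by (auto simp: served_demands_red_f)
  have load: "(\<Sum>c | c \<in> S \<and> asg (c, 0) = v. d_eps (red_demand n l c)) \<le> 1" for v
  proof (cases "v < n")
    case True
    then show ?thesis
      using red_f.feasible_vehicle_load_le[OF feasible] by (simp add: vehicle_load_red_f[OF S])
  next
    case False
    then have none: "{c. c \<in> S \<and> asg (c, 0) = v} = {}" using vehicle by auto
    show ?thesis unfolding none by simp
  qed
  show "card S + bpp_opt n l \<le> 2 * n"
    by (rule assignment_card_bound[OF L S _ load]) (simp add: vehicle)
qed

lemma red_f_schedule_from_packing:
  assumes L: "\<forall>i\<in>{1..n}. 0 < l i \<and> l i \<le> 1"
  shows "\<exists>asg act loc en. evsp_feasible (red_f n l) {..<2 * n - bpp_opt n l} asg act loc en"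
proof -
  let ?S = "{..<2 * n - bpp_opt n l}"
  obtain g where g: "\<forall>c<2 * n - bpp_opt n l. g c < n"
    "\<And>v. (\<Sum>c | c < 2 * n - bpp_opt n l \<and> g c = v. d_eps (red_demand n l c)) \<le> 1"
    "\<And>c c'. g c = g c' \<Longrightarrow> d_dep (red_demand n l c) = d_dep (red_demand n l c') \<Longrightarrow> c = c'"
    using optimal_packing_assignment[OF L] by blast
  have S: "?S \<subseteq> {..<2 * n}" by auto
  interpret round_trip_plan "red_f n l" ?S "\<lambda>d. g (fst d)"
  proof
    show "d \<in> departing (red_f n l) ?S (\<lambda>d. g (fst d)) v t \<Longrightarrow>
        d' \<in> departing (red_f n l) ?S (\<lambda>d. g (fst d)) v t \<Longrightarrow> d = d'" for d d' v t
      using g(3) by (auto simp: departing_def served_demands_red_f[OF S] dem_red_f)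
    show "vehicle_load (red_f n l) ?S (\<lambda>d. g (fst d)) v \<le> v_en0 (red_f n l) v" for v
      using g(2) by (simp add: vehicle_load_red_f[OF S])
    show "card {v. v < n_veh (red_f n l) \<and> v_home (red_f n l) v = s} \<le> st_cap (red_f n l) s" for s
      by (cases "s = 0") auto
  qed (use g(1) less_imp_le[OF red_demand_eps_pos[OF L]] in \<open>auto simp: served_demands_red_f[OF S] dem_red_f\<close>)
  show ?thesis using plan_feasible by blast
qed

theorem proposition6:
  fixes n :: nat and l :: "nat \<Rightarrow> real"
  assumes "\<forall>i\<in>{1..n}. 0 < l i \<and> l i \<le> 1"
  shows "int (evsp_opt (red_f n l)) = 2 * int n - int (bpp_opt n l)"
proof -
  let ?values = "{rental_time (red_f n l) S | S. \<exists>asg act loc en. evsp_feasible (red_f n l) S asg act loc en}"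
  have "rental_time (red_f n l) {..<2 * n - bpp_opt n l} = 2 * n - bpp_opt n l"
    by (simp add: rental_time_red_f)
  then have attained: "2 * n - bpp_opt n l \<in> ?values"
    using red_f_schedule_from_packing[OF assms] by (metis (mono_tags, lifting) mem_Collect_eq)
  have bound: "x \<le> 2 * n - bpp_opt n l" if x_mem: "x \<in> ?values" for x
  proof -
    obtain S asg act loc en where x: "x = rental_time (red_f n l) S"
      and feasible: "evsp_feasible (red_f n l) S asg act loc en"
      using x_mem by blast
    show ?thesis
      using red_f_feasible_card_bound[OF assms feasible] by (simp add: x rental_time_red_f)
  qed
  then have "?values \<subseteq> {..2 * n - bpp_opt n l}" by blast
  then have "finite ?values" by (rule finite_subset) simp
  then have "evsp_opt (red_f n l) = 2 * n - bpp_opt n l"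
    unfolding evsp_opt_def using bound attained by (rule Max_eqI)
  moreover have "bpp_opt n l \<le> n"
    using assms by (intro bpp_opt_le_items) auto
  ultimately show ?thesis by (simp add: of_nat_diff)
qed

end
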